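(* Given index sets $\hat{\mathcal{R}}\subseteq\mathcal{R}$ and $\hat{\mathcal{L}}\subseteq\mathcal{L}$, we have: 1. $[\theta^*(C)]_{\hat{\mathcal{R}}}=\alpha$ and $[\theta^*(C)]_{\hat{\mathcal{L}}}=\beta$. 2. Let $\hat{\mathcal{S}}=\hat{\mathcal{R}}\cup\hat{\mathcal{L}}$, $|\hat{\mathcal{S}}^{\rm c}|$ be the cardinality of $\hat{\mathcal{S}}^{\rm c}$, $\hat{\mathbf{G}}_{11}=[\mathbf{Z}^T]_{\hat{\mathcal{S}}^{\rm c}}^T[\mathbf{Z}^T]_{\hat{\mathcal{S}}^{\rm c}}$, $\hat{\mathbf{G}}_{12}=[\mathbf{Z}^T]_{\hat{\mathcal{S}}^{\rm c}}^T[\mathbf{Z}^T]_{\hat{\mathcal{S}}}$ and $\hat{\mathbf{y}}=[\bar{\mathbf{y}}]_{\hat{\mathcal{S}}^{\rm c}}-C\hat{\mathbf{G}}_{12}[\theta^*(C)]_{\hat{\mathcal{S}}}$. Then $[\theta^*(C)]_{\hat{\mathcal{S}}^{\rm c}}$ can be computed by solving $$\min_{\hat{\theta}\in\mathbb{R}^{|\hat{\mathcal{S}}^{\rm c}|}}\ \frac{C}{2}\hat{\theta}^T\hat{\mathbf{G}}_{11}\hat{\theta}-\hat{\mathbf{y}}^T\hat{\theta}\quad \text{s.t. } \hat{\theta}\in[\alpha,\beta]^{|\hat{\mathcal{S}}^{\rm c}|}.$$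
   Context: Observations $\{\mathbf{x}_i,y_i\}_{i=1}^l$ with $\mathbf{x}_i\in\mathbb{R}^n$, $y_i\in\mathbb{R}$, and scalars $a_i,b_i$. Consider the primal problem $\min_{\mathbf{w}\in\mathbb{R}^n}\frac12\|\mathbf{w}\|^2+C\sum_{i=1}^l\varphi(\mathbf{w}^T(a_i\mathbf{x}_i)+b_iy_i)$ with $C>0$, where $\varphi:\mathbb{R}\to\mathbb{R}_+$ is a nonconstant continuous sublinear (convex and positively homogeneous) function; its conjugate $\varphi^*$ is the indicator function of a closed interval $[\alpha,\beta]$ with $\alpha<\beta$. Let $\mathbf{Z}=(a_1\mathbf{x}_1,\ldots,a_l\mathbf{x}_l)^T$ and $\bar{\mathbf{y}}=(b_1y_1,\ldots,b_ly_l)^T$. The dual problem is $\min_{\theta\in[\alpha,\beta]^l}\frac{C}{2}\|\mathbf{Z}^T\theta\|^2-\langle\bar{\mathbf{y}},\theta\rangle$. Let $\mathbf{w}^*(C)$ and $\theta^*(C)$ be the primal and dual optimal solutions, related by $\mathbf{w}^*(C)=-C\mathbf{Z}^T\theta^*(C)$. Define $\mathcal{R}=\{i:-\langle\mathbf{w}^*(C),a_i\mathbf{x}_i\rangle>b_iy_i\}$ and $\mathcal{L}=\{i:-\langle\mathbf{w}^*(C),a_i\mathbf{x}_i\rangle<b_iy_i\}$ (indices of non-support vectors). Notation: $\mathcal{I}=\{1,\ldots,l\}$; for $\mathcal{J}\subseteq\mathcal{I}$, $\mathcal{J}^{\rm c}=\mathcal{I}\setminus\mathcal{J}$, $[\mathbf{x}]_{\mathcal{J}}$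 is the subvector of $\mathbf{x}$ indexed by $\mathcal{J}$ and $[\mathbf{M}]_{\mathcal{J}}$ is the submatrix of columns of $\mathbf{M}$ indexed by $\mathcal{J}$. *)

theory Defs
  imports "HOL-Analysis.Analysis"
begin

text \<open>Observations are indexed by the index set I = {1..l}; vectors in R^l (resp. R^J)
  are represented as functions nat => real, only their values on I (resp. J) matter.\<close>

definition conjugate :: "(real \<Rightarrow> real) \<Rightarrow> real \<Rightarrow> ereal" where
  "conjugate \<phi> s = (SUP t. ereal (s * t - \<phi> t))"

definition sublinear :: "(real \<Rightarrow> real) \<Rightarrow> bool" where
  "sublinear \<phi> \<longleftrightarrow> convex_on UNIV \<phi> \<and> (\<forall>t>0. \<forall>s. \<phi> (t * s) = t * \<phi> s)"

definition idx :: "nat \<Rightarrow> nat set" where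
  "idx l = {1..l}"

definition zrow :: "(nat \<Rightarrow> real) \<Rightarrow> (nat \<Rightarrow> real^'n) \<Rightarrow> nat \<Rightarrow> real^'n" where
  "zrow a x i = a i *\<^sub>R x i"

definition ZT :: "nat \<Rightarrow> (nat \<Rightarrow> real) \<Rightarrow> (nat \<Rightarrow> real^'n) \<Rightarrow> (nat \<Rightarrow> real) \<Rightarrow> real^'n" where
  "ZT l a x \<theta> = (\<Sum>i\<in>idx l. \<theta> i *\<^sub>R zrow a x i)"

definition ybar :: "(nat \<Rightarrow> real) \<Rightarrow> (nat \<Rightarrow> real) \<Rightarrow> nat \<Rightarrow> real" where
  "ybar b y i = b i * y i"

definition primal_obj :: "real \<Rightarrow> (real \<Rightarrow> real) \<Rightarrow> nat \<Rightarrow> (nat \<Rightarrow> real) \<Rightarrow> (nat \<Rightarrow> real^'n)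
    \<Rightarrow> (nat \<Rightarrow> real) \<Rightarrow> (nat \<Rightarrow> real) \<Rightarrow> real^'n \<Rightarrow> real" where
  "primal_obj C \<phi> l a x b y w =
     1/2 * (norm w)^2 + C * (\<Sum>i\<in>idx l. \<phi> (w \<bullet> zrow a x i + ybar b y i))"

definition dual_obj :: "real \<Rightarrow> nat \<Rightarrow> (nat \<Rightarrow> real) \<Rightarrow> (nat \<Rightarrow> real^'n)
    \<Rightarrow> (nat \<Rightarrow> real) \<Rightarrow> (nat \<Rightarrow> real) \<Rightarrow> (nat \<Rightarrow> real) \<Rightarrow> real" where
  "dual_obj C l a x b y \<theta> =
     C/2 * (norm (ZT l a x \<theta>))^2 - (\<Sum>i\<in>idx l. ybar b y i * \<theta> i)"

definition in_box :: "real \<Rightarrow> real \<Rightarrow> nat set \<Rightarrow> (nat \<Rightarrow> real) \<Rightarrow> bool" where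
  "in_box \<alpha> \<beta> J \<theta> \<longleftrightarrow> (\<forall>i\<in>J. \<alpha> \<le> \<theta> i \<and> \<theta> i \<le> \<beta>)"

definition Rset :: "nat \<Rightarrow> (nat \<Rightarrow> real) \<Rightarrow> (nat \<Rightarrow> real^'n) \<Rightarrow> (nat \<Rightarrow> real) \<Rightarrow> (nat \<Rightarrow> real)
    \<Rightarrow> real^'n \<Rightarrow> nat set" where
  "Rset l a x b y w = {i\<in>idx l. - (w \<bullet> zrow a x i) > ybar b y i}"

definition Lset :: "nat \<Rightarrow> (nat \<Rightarrow> real) \<Rightarrow> (nat \<Rightarrow> real^'n) \<Rightarrow> (nat \<Rightarrow> real) \<Rightarrow> (nat \<Rightarrow> real)
    \<Rightarrow> real^'n \<Rightarrow> nat set" where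
  "Lset l a x b y w = {i\<in>idx l. - (w \<bullet> zrow a x i) < ybar b y i}"

text \<open>Entries of G11 = [Z^T]_{Sc}^T [Z^T]_{Sc} and G12 = [Z^T]_{Sc}^T [Z^T]_S are the
  inner products (z i) . (z j) for i in Sc and j in Sc resp. j in S.\<close>
definition G :: "(nat \<Rightarrow> real) \<Rightarrow> (nat \<Rightarrow> real^'n) \<Rightarrow> nat \<Rightarrow> nat \<Rightarrow> real" where
  "G a x i j = zrow a x i \<bullet> zrow a x j"

definition yhat :: "real \<Rightarrow> nat \<Rightarrow> (nat \<Rightarrow> real) \<Rightarrow> (nat \<Rightarrow> real^'n) \<Rightarrow> (nat \<Rightarrow> real) \<Rightarrow> (nat \<Rightarrow> real)
    \<Rightarrow> nat set \<Rightarrow> (nat \<Rightarrow> real) \<Rightarrow> nat \<Rightarrow> real" where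
  "yhat C l a x b y S \<theta> i = ybar b y i - C * (\<Sum>j\<in>S. G a x i j * \<theta> j)"

definition reduced_obj :: "real \<Rightarrow> nat \<Rightarrow> (nat \<Rightarrow> real) \<Rightarrow> (nat \<Rightarrow> real^'n) \<Rightarrow> (nat \<Rightarrow> real)
    \<Rightarrow> (nat \<Rightarrow> real) \<Rightarrow> nat set \<Rightarrow> (nat \<Rightarrow> real) \<Rightarrow> (nat \<Rightarrow> real) \<Rightarrow> real" where
  "reduced_obj C l a x b y S \<theta>S th =
     C/2 * (\<Sum>i\<in>idx l - S. \<Sum>j\<in>idx l - S. th i * G a x i j * th j)
     - (\<Sum>i\<in>idx l - S. yhat C l a x b y S \<theta>S i * th i)"

end

theory Submission
  imports Defs
begin

text \<open>The dual objective is a convex quadratic whose partial derivative in coordinate i is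
  \<open>- \<langle>w, z\<^sub>i\<rangle> - ybar\<^sub>i\<close> with \<open>w = - C Z\<^sup>T\<theta>\<close>. At a minimiser over the box, a one-sided
  perturbation of a single coordinate shows that this derivative is \<open>\<le> 0\<close> where
  \<open>\<theta>\<^sub>i > \<alpha>\<close> and \<open>\<ge> 0\<close> where \<open>\<theta>\<^sub>i < \<beta>\<close>; on \<open>\<R>\<close> it is positive, forcing \<open>\<theta>\<^sub>i = \<alpha>\<close>, and on
  \<open>\<L>\<close> negative, forcing \<open>\<theta>\<^sub>i = \<beta>\<close>. Once the coordinates on S are frozen, the dual objective
  is the reduced objective plus a constant, so both problems have the same minimisers.\<close>

definition dual_grad ::
    "real \<Rightarrow> nat \<Rightarrow> (nat \<Rightarrow> real) \<Rightarrow> (nat \<Rightarrow> real^'n) \<Rightarrow> (nat \<Rightarrow> real) \<Rightarrow> (nat \<Rightarrow> real)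
      \<Rightarrow> (nat \<Rightarrow> real) \<Rightarrow> nat \<Rightarrow> real" where
  "dual_grad C l a x b y \<theta> i = C * (ZT l a x \<theta> \<bullet> zrow a x i) - ybar b y i"

lemma nonpos_if_linear_le_quadratic_near_zero:
  fixes h q d :: real
  assumes "d > 0" and le: "\<And>t. 0 < t \<Longrightarrow> t \<le> d \<Longrightarrow> t * h \<le> t\<^sup>2 * q"
  shows "h \<le> 0"
proof (rule ccontr)
  assume "\<not> h \<le> 0"
  define t where "t = min d (h / (\<bar>q\<bar> + 1))"
  have t_pos: "t > 0" using \<open>d > 0\<close> \<open>\<not> h \<le> 0\<close> by (simp add: t_def)
  have "t \<le> h / (\<bar>q\<bar> + 1)" by (simp add: t_def)
  hence "t * (\<bar>q\<bar> + 1) \<le> h" by (simp add: pos_le_divide_eq add_nonneg_pos)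
  moreover have "t * q < t * (\<bar>q\<bar> + 1)" using t_pos by (simp add: abs_ge_self order.strict_trans1)
  ultimately have "t * q < h" by linarith
  hence "t * (t * q) < t * h" using t_pos by simp
  with le[OF t_pos] show False by (simp add: t_def power2_eq_square algebra_simps)
qed

lemma ZT_update:
  assumes "i \<in> idx l"
  shows "ZT l a x (f(i := f i + s)) = ZT l a x f + s *\<^sub>R zrow a x i"
proof -
  have "ZT l a x (f(i := f i + s))
      = (\<Sum>j\<in>idx l. f j *\<^sub>R zrow a x j + (if j = i then s *\<^sub>R zrow a x i else 0))"
    unfolding ZT_def by (rule sum.cong) (auto simp: scaleR_add_left)
  also have "\<dots> = ZT l a x f + s *\<^sub>R zrow a x i"
    using assms by (simp add: sum.distrib ZT_def idx_def)
  finally show ?thesis .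
qed

lemma dual_obj_update:
  assumes i: "i \<in> idx l"
  shows "dual_obj C l a x b y (f(i := f i + s)) = dual_obj C l a x b y f
     + s * dual_grad C l a x b y f i + C/2 * s\<^sup>2 * (norm (zrow a x i))\<^sup>2"
proof -
  have lin: "(\<Sum>j\<in>idx l. ybar b y j * (f(i := f i + s)) j)
      = (\<Sum>j\<in>idx l. ybar b y j * f j) + ybar b y i * s"
  proof -
    have "(\<Sum>j\<in>idx l. ybar b y j * (f(i := f i + s)) j)
        = (\<Sum>j\<in>idx l. ybar b y j * f j + (if j = i then ybar b y i * s else 0))"
      by (rule sum.cong) (auto simp: algebra_simps)
    thus ?thesis using i by (simp add: sum.distrib idx_def)
  qed
  have quad: "(norm (ZT l a x f + s *\<^sub>R zrow a x i))\<^sup>2 = (norm (ZT l a x f))\<^sup>2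
      + 2 * s * (ZT l a x f \<bullet> zrow a x i) + s\<^sup>2 * (norm (zrow a x i))\<^sup>2"
    unfolding power2_norm_eq_inner
    by (simp add: inner_add_left inner_add_right inner_commute algebra_simps power2_eq_square)
  show ?thesis
    unfolding dual_obj_def dual_grad_def ZT_update[OF i] lin quad by (simp add: algebra_simps)
qed

lemma dual_grad_sign_at_box_min:
  assumes opt: "\<forall>\<theta>. in_box \<alpha> \<beta> (idx l) \<theta> \<longrightarrow> dual_obj C l a x b y f \<le> dual_obj C l a x b y \<theta>"
    and i: "i \<in> idx l" and "d > 0"
    and feasible_dir: "\<And>t. 0 < t \<Longrightarrow> t \<le> d \<Longrightarrow> in_box \<alpha> \<beta> (idx l) (f(i := f i + t * \<sigma>))"
  shows "\<sigma> * dual_grad C l a x b y f i \<ge> 0"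
proof -
  have "- \<sigma> * dual_grad C l a x b y f i \<le> 0"
  proof (rule nonpos_if_linear_le_quadratic_near_zero[OF \<open>d > 0\<close>])
    fix t :: real assume "0 < t" "t \<le> d"
    with opt feasible_dir have "dual_obj C l a x b y f \<le> dual_obj C l a x b y (f(i := f i + t * \<sigma>))"
      by blast
    thus "t * (- \<sigma> * dual_grad C l a x b y f i)
        \<le> t\<^sup>2 * (C/2 * \<sigma>\<^sup>2 * (norm (zrow a x i))\<^sup>2)"
      unfolding dual_obj_update[OF i] by (simp add: power_mult_distrib algebra_simps)
  qed
  thus ?thesis by simp
qed

lemma box_min_eq_lower_if_dual_grad_pos:
  assumes opt: "\<forall>\<theta>. in_box \<alpha> \<beta> (idx l) \<theta> \<longrightarrow> dual_obj C l a x b y f \<le> dual_obj C l a x b y \<theta>"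
    and feas: "in_box \<alpha> \<beta> (idx l) f" and i: "i \<in> idx l"
    and pos: "dual_grad C l a x b y f i > 0"
  shows "f i = \<alpha>"
proof (rule ccontr)
  assume "f i \<noteq> \<alpha>"
  with feas i have "f i > \<alpha>" unfolding in_box_def by force
  have "- 1 * dual_grad C l a x b y f i \<ge> 0"
  proof (rule dual_grad_sign_at_box_min[OF opt i])
    show "f i - \<alpha> > 0" using \<open>f i > \<alpha>\<close> by simp
  next
    fix t :: real assume "0 < t" "t \<le> f i - \<alpha>"
    with feas show "in_box \<alpha> \<beta> (idx l) (f(i := f i + t * - 1))" unfolding in_box_def by auto
  qed
  with pos show False by simp
qed

lemma box_min_eq_upper_if_dual_grad_neg:
  assumes opt: "\<forall>\<theta>. in_box \<alpha> \<beta> (idx l) \<theta> \<longrightarrow> dual_obj C l a x b y f \<le> dual_obj C l a x b y \<theta>"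
    and feas: "in_box \<alpha> \<beta> (idx l) f" and i: "i \<in> idx l"
    and neg: "dual_grad C l a x b y f i < 0"
  shows "f i = \<beta>"
proof (rule ccontr)
  assume "f i \<noteq> \<beta>"
  with feas i have "f i < \<beta>" unfolding in_box_def by force
  have "1 * dual_grad C l a x b y f i \<ge> 0"
  proof (rule dual_grad_sign_at_box_min[OF opt i])
    show "\<beta> - f i > 0" using \<open>f i < \<beta>\<close> by simp
  next
    fix t :: real assume "0 < t" "t \<le> \<beta> - f i"
    with feas show "in_box \<alpha> \<beta> (idx l) (f(i := f i + t * 1))" unfolding in_box_def by auto
  qed
  with neg show False by simp
qed

lemma dual_grad_eq_inner:
  "dual_grad C l a x b y \<theta> i = - ((- C *\<^sub>R ZT l a x \<theta>) \<bullet> zrow a x i) - ybar b y i"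
  by (simp add: dual_grad_def)

lemma norm_ZT_sq:
  "(norm (ZT l a x f))\<^sup>2 = (\<Sum>i\<in>idx l. \<Sum>j\<in>idx l. f i * G a x i j * f j)"
  unfolding power2_norm_eq_inner ZT_def G_def
  by (simp add: inner_sum_left inner_sum_right sum_distrib_left inner_commute algebra_simps)

lemma dual_obj_split:
  assumes S: "S \<subseteq> idx l"
  shows "dual_obj C l a x b y f = reduced_obj C l a x b y S f f
     + (C/2 * (\<Sum>i\<in>S. \<Sum>j\<in>S. f i * G a x i j * f j) - (\<Sum>i\<in>S. ybar b y i * f i))"
proof -
  let ?Sc = "idx l - S"
  let ?g = "\<lambda>i j. f i * G a x i j * f j"
  have split: "sum h (idx l) = sum h ?Sc + sum h S" for h :: "nat \<Rightarrow> real"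
    using sum.subset_diff[OF S] by (simp add: idx_def)
  have blocks: "(\<Sum>i\<in>idx l. \<Sum>j\<in>idx l. ?g i j) =
     (\<Sum>i\<in>?Sc. \<Sum>j\<in>?Sc. ?g i j) + (\<Sum>i\<in>?Sc. \<Sum>j\<in>S. ?g i j)
     + (\<Sum>i\<in>S. \<Sum>j\<in>?Sc. ?g i j) + (\<Sum>i\<in>S. \<Sum>j\<in>S. ?g i j)"
    by (simp add: split sum.distrib)
  have G_sym: "(\<Sum>i\<in>S. \<Sum>j\<in>?Sc. ?g i j) = (\<Sum>i\<in>?Sc. \<Sum>j\<in>S. ?g i j)"
    by (subst sum.swap) (simp add: G_def inner_commute mult.commute mult.left_commute)
  have yhat_term: "(\<Sum>i\<in>?Sc. yhat C l a x b y S f i * f i)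
      = (\<Sum>i\<in>?Sc. ybar b y i * f i) - C * (\<Sum>i\<in>?Sc. \<Sum>j\<in>S. ?g i j)"
    unfolding yhat_def by (simp add: algebra_simps sum_subtractf sum_distrib_left sum_distrib_right)
  show ?thesis
    unfolding dual_obj_def reduced_obj_def norm_ZT_sq blocks G_sym split[of "\<lambda>i. ybar b y i * f i"]
      yhat_term
    by (simp add: algebra_simps)
qed

lemma dual_obj_merge:
  assumes "S \<subseteq> idx l"
  shows "dual_obj C l a x b y (\<lambda>i. if i \<in> S then \<theta> i else th i)
     = reduced_obj C l a x b y S \<theta> th + (dual_obj C l a x b y \<theta> - reduced_obj C l a x b y S \<theta> \<theta>)"
proof -
  let ?m = "\<lambda>i. if i \<in> S then \<theta> i else th i"
  have "reduced_obj C l a x b y S ?m ?m = reduced_obj C l a x b y S \<theta> th"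
  proof -
    have "yhat C l a x b y S ?m i = yhat C l a x b y S \<theta> i" for i
      unfolding yhat_def by (simp cong: sum.cong)
    moreover have "(\<Sum>i\<in>idx l - S. \<Sum>j\<in>idx l - S. ?m i * G a x i j * ?m j)
        = (\<Sum>i\<in>idx l - S. \<Sum>j\<in>idx l - S. th i * G a x i j * th j)"
      by (intro sum.cong) auto
    ultimately show ?thesis unfolding reduced_obj_def by (auto intro!: sum.cong)
  qed
  moreover have "(\<Sum>i\<in>S. \<Sum>j\<in>S. ?m i * G a x i j * ?m j) = (\<Sum>i\<in>S. \<Sum>j\<in>S. \<theta> i * G a x i j * \<theta> j)"
    and "(\<Sum>i\<in>S. ybar b y i * ?m i) = (\<Sum>i\<in>S. ybar b y i * \<theta> i)"
    by (simp_all cong: sum.cong)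
  ultimately show ?thesis
    using dual_obj_split[OF assms, of C a x b y ?m] dual_obj_split[OF assms, of C a x b y \<theta>] by simp
qed

lemma box_min_restricts_to_reduced_problem:
  assumes S: "S \<subseteq> idx l"
    and feas: "in_box \<alpha> \<beta> (idx l) \<theta>"
    and opt: "\<forall>\<theta>'. in_box \<alpha> \<beta> (idx l) \<theta>' \<longrightarrow> dual_obj C l a x b y \<theta> \<le> dual_obj C l a x b y \<theta>'"
  shows "\<forall>th. in_box \<alpha> \<beta> (idx l - S) th \<longrightarrow>
           reduced_obj C l a x b y S \<theta> \<theta> \<le> reduced_obj C l a x b y S \<theta> th"
    and "\<forall>th. (in_box \<alpha> \<beta> (idx l - S) th \<and>
           (\<forall>th'. in_box \<alpha> \<beta> (idx l - S) th' \<longrightarrow>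
              reduced_obj C l a x b y S \<theta> th \<le> reduced_obj C l a x b y S \<theta> th'))
         \<longrightarrow> (\<forall>\<theta>'. in_box \<alpha> \<beta> (idx l) \<theta>' \<longrightarrow>
              dual_obj C l a x b y (\<lambda>i. if i \<in> S then \<theta> i else th i) \<le> dual_obj C l a x b y \<theta>')"
proof -
  have merge_feas: "in_box \<alpha> \<beta> (idx l) (\<lambda>i. if i \<in> S then \<theta> i else th i)"
    if "in_box \<alpha> \<beta> (idx l - S) th" for th
    using feas that unfolding in_box_def by auto
  show "\<forall>th. in_box \<alpha> \<beta> (idx l - S) th \<longrightarrow>
           reduced_obj C l a x b y S \<theta> \<theta> \<le> reduced_obj C l a x b y S \<theta> th"
  proof (intro allI impI)
    fix th assume "in_box \<alpha> \<beta> (idx l - S) th"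
    with opt merge_feas have "dual_obj C l a x b y \<theta>
        \<le> dual_obj C l a x b y (\<lambda>i. if i \<in> S then \<theta> i else th i)" by blast
    thus "reduced_obj C l a x b y S \<theta> \<theta> \<le> reduced_obj C l a x b y S \<theta> th"
      unfolding dual_obj_merge[OF S] by simp
  qed
  have \<theta>_feas: "in_box \<alpha> \<beta> (idx l - S) \<theta>" using feas unfolding in_box_def by auto
  show "\<forall>th. (in_box \<alpha> \<beta> (idx l - S) th \<and>
           (\<forall>th'. in_box \<alpha> \<beta> (idx l - S) th' \<longrightarrow>
              reduced_obj C l a x b y S \<theta> th \<le> reduced_obj C l a x b y S \<theta> th'))
         \<longrightarrow> (\<forall>\<theta>'. in_box \<alpha> \<beta> (idx l) \<theta>' \<longrightarrow>
              dual_obj C l a x b y (\<lambda>i. if i \<in> S then \<theta> i else th i) \<le> dual_obj C l a x b y \<theta>')"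
  proof (intro allI impI)
    fix th \<theta>'
    assume th_min: "in_box \<alpha> \<beta> (idx l - S) th \<and>
           (\<forall>th'. in_box \<alpha> \<beta> (idx l - S) th' \<longrightarrow>
              reduced_obj C l a x b y S \<theta> th \<le> reduced_obj C l a x b y S \<theta> th')"
      and "in_box \<alpha> \<beta> (idx l) \<theta>'"
    from th_min \<theta>_feas have "reduced_obj C l a x b y S \<theta> th \<le> reduced_obj C l a x b y S \<theta> \<theta>"
      by blast
    hence "dual_obj C l a x b y (\<lambda>i. if i \<in> S then \<theta> i else th i) \<le> dual_obj C l a x b y \<theta>"
      unfolding dual_obj_merge[OF S] by simp
    also have "\<dots> \<le> dual_obj C l a x b y \<theta>'" using opt \<open>in_box \<alpha> \<beta> (idx l) \<theta>'\<close> by blast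
    finally show "dual_obj C l a x b y (\<lambda>i. if i \<in> S then \<theta> i else th i) \<le> dual_obj C l a x b y \<theta>'" .
  qed
qed

theorem lemma3:
  fixes l :: nat and x :: "nat \<Rightarrow> real^'n" and y a b :: "nat \<Rightarrow> real"
    and C \<alpha> \<beta> :: real and \<phi> :: "real \<Rightarrow> real"
    and wstar :: "real^'n" and \<theta>star :: "nat \<Rightarrow> real"
    and Rh Lh :: "nat set"
  assumes C_pos: "C > 0"
    and phi_nonneg: "\<forall>t. \<phi> t \<ge> 0"
    and phi_cont: "continuous_on UNIV \<phi>"
    and phi_sublin: "sublinear \<phi>"
    and phi_nonconst: "\<exists>s t. \<phi> s \<noteq> \<phi> t"
    and ab: "\<alpha> < \<beta>"
    and phi_conj: "\<forall>s. conjugate \<phi> s = (if \<alpha> \<le> s \<and> s \<le> \<beta> then 0 else \<infinity>)"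
    and w_opt: "\<forall>w. primal_obj C \<phi> l a x b y wstar \<le> primal_obj C \<phi> l a x b y w"
    and th_feas: "in_box \<alpha> \<beta> (idx l) \<theta>star"
    and th_opt: "\<forall>\<theta>. in_box \<alpha> \<beta> (idx l) \<theta> \<longrightarrow>
                    dual_obj C l a x b y \<theta>star \<le> dual_obj C l a x b y \<theta>"
    and w_th: "wstar = - C *\<^sub>R ZT l a x \<theta>star"
    and Rh_sub: "Rh \<subseteq> Rset l a x b y wstar"
    and Lh_sub: "Lh \<subseteq> Lset l a x b y wstar"
  shows "(\<forall>i\<in>Rh. \<theta>star i = \<alpha>) \<and> (\<forall>i\<in>Lh. \<theta>star i = \<beta>)
    \<and> (in_box \<alpha> \<beta> (idx l - (Rh \<union> Lh)) \<theta>star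
       \<and> (\<forall>th. in_box \<alpha> \<beta> (idx l - (Rh \<union> Lh)) th \<longrightarrow>
            reduced_obj C l a x b y (Rh \<union> Lh) \<theta>star \<theta>star
              \<le> reduced_obj C l a x b y (Rh \<union> Lh) \<theta>star th))
    \<and> (\<forall>th. (in_box \<alpha> \<beta> (idx l - (Rh \<union> Lh)) th \<and>
            (\<forall>th'. in_box \<alpha> \<beta> (idx l - (Rh \<union> Lh)) th' \<longrightarrow>
               reduced_obj C l a x b y (Rh \<union> Lh) \<theta>star th
                 \<le> reduced_obj C l a x b y (Rh \<union> Lh) \<theta>star th'))
         \<longrightarrow> (\<forall>\<theta>. in_box \<alpha> \<beta> (idx l) \<theta> \<longrightarrow>
               dual_obj C l a x b y (\<lambda>i. if i \<in> Rh \<union> Lh then \<theta>star i else th i)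
                 \<le> dual_obj C l a x b y \<theta>))"
proof -
  have on_R: "\<forall>i\<in>Rh. \<theta>star i = \<alpha>"
    using Rh_sub box_min_eq_lower_if_dual_grad_pos[OF th_opt th_feas]
    unfolding Rset_def w_th dual_grad_eq_inner by auto
  have on_L: "\<forall>i\<in>Lh. \<theta>star i = \<beta>"
    using Lh_sub box_min_eq_upper_if_dual_grad_neg[OF th_opt th_feas]
    unfolding Lset_def w_th dual_grad_eq_inner by auto
  have S: "Rh \<union> Lh \<subseteq> idx l" using Rh_sub Lh_sub unfolding Rset_def Lset_def by auto
  have "in_box \<alpha> \<beta> (idx l - (Rh \<union> Lh)) \<theta>star" using th_feas unfolding in_box_def by auto
  with on_R on_L box_min_restricts_to_reduced_problem[OF S th_feas th_opt] show ?thesis by blast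
qed

end
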